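(* Assume $\ell=2$. An observed law $\mathcal P$ of $(Y,D,Z)$ with $\mathcal P(Z=0),\mathcal P(Z=1)>0$ is induced by some full data law satisfying exclusion, random assignment and consistency if and only if $$\sum_{k\in[n]}-p_{k0,1}+\sum_{k\in T}(p_{k1,0}-p_{k1,1})\le 0\quad\text{for all nonempty }T\subseteq\{0,\dots,n-2\},$$ $$\sum_{k\in[n]}-p_{k1,0}+\sum_{k\in T}(p_{k0,1}-p_{k0,0})\le 0\quad\text{for all nonempty }T\subsetneq[n],$$ $$\sum_{k\in[n]}-p_{k0,0}+\sum_{k\in T}(p_{k1,1}-p_{k1,0})\le 0\quad\text{for all nonempty }T\subseteq\{0,\dots,n-2\}.$$
   Context: $D\in\{0,1\}$ treatment; $Y$ outcome with values $\gamma_0<\dots<\gamma_{n-1}$; instrument $Z\in\{0,1\}$; $[n]=\{0,\dots,n-1\}$. Potential outcomes $Y^{(d,z)}$, potential treatments $D^{(z)}$. Exclusion: $Y^{(d,0)}=Y^{(d,1)}$ a.s., written $Y^{(d)}$. Random assignment: $Z\perp(Y^{(0)},Y^{(1)},D^{(0)},D^{(1)})$. Consistency: $Y=(1-D)Y^{(0)}+DY^{(1)}$, $D=\mathbb 1(Z=0)D^{(0)}+\mathbb 1(Z=1)D^{(1)}$. A full data law is a joint law of $(Y^{(0)},Y^{(1)},D^{(0)},D^{(1)},Z)$, inducing the observed law of $(Y,D,Z)$. $p_{yd,z}=\mathcal P(Y=\gamma_y,D=d\mid Z=z)$. *)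

theory Defs
  imports "HOL-Probability.Probability"
begin

(* Outcome values gamma_0 < ... < gamma_{n-1} are represented by their indices k in {..<n}.
   Treatment D and instrument Z are booleans (True = 1, False = 0).

   Full data: ((Y0, Y1, D0, D1), Z), i.e. the joint law of (Y^(0),Y^(1),D^(0),D^(1),Z);
   exclusion is built in by using the potential outcomes Y^(d) directly.
   Observed data: (Y, D, Z). *)

type_synonym full_data = "(nat \<times> nat \<times> bool \<times> bool) \<times> bool"
type_synonym obs_data = "nat \<times> bool \<times> bool"

(* consistency: D = D^(Z), Y = (1-D) Y^(0) + D Y^(1) *)
definition obs :: "full_data \<Rightarrow> obs_data" where
  "obs \<omega> = (let (u, z) = \<omega>; (y0, y1, d0, d1) = u;
              d = (if z then d1 else d0) in ((if d then y1 else y0), d, z))"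

definition random_assignment :: "full_data pmf \<Rightarrow> bool" where
  "random_assignment F \<longleftrightarrow>
     (\<forall>A B. measure_pmf.prob F {\<omega>. fst \<omega> \<in> A \<and> snd \<omega> \<in> B}
            = measure_pmf.prob F {\<omega>. fst \<omega> \<in> A} * measure_pmf.prob F {\<omega>. snd \<omega> \<in> B})"

definition outcomes_in :: "nat \<Rightarrow> full_data pmf \<Rightarrow> bool" where
  "outcomes_in n F \<longleftrightarrow> (\<forall>\<omega>\<in>set_pmf F. fst (fst \<omega>) < n \<and> fst (snd (fst \<omega>)) < n)"

definition induced_by :: "nat \<Rightarrow> full_data pmf \<Rightarrow> obs_data pmf \<Rightarrow> bool" where
  "induced_by n F Q \<longleftrightarrow> outcomes_in n F \<and> random_assignment F \<and> map_pmf obs F = Q"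

definition pcond :: "obs_data pmf \<Rightarrow> nat \<Rightarrow> bool \<Rightarrow> bool \<Rightarrow> real" where
  "pcond Q k d z = measure_pmf.prob Q {(k, d, z)} / measure_pmf.prob Q {w. snd (snd w) = z}"

end

(*
  Under exclusion and random assignment, p_{kd,z} is the probability that the profile
  (Y^(0), Y^(1), D^(0), D^(1)) lies in the cell {D^(z) = d, Y^(d) = k}.  These cells sit inside
  {Y^(d) = k}, so Pearl's instrumental inequality  sum_k max_z p_{kd,z} <= 1  holds for d = 0, 1.
  A sum of maxima is the largest of the sums  sum_{k in T} p_{kd,1} + sum_{k notin T} p_{kd,0},
  and with  sum_k (p_{k0,z} + p_{k1,z}) = 1  these are exactly the displayed inequalities:
  the family for d = 1 is split according to whether n - 1 lies in T or in its complement,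
  and T = {} or T = [n] give trivial inequalities.

  Conversely, the instrumental inequality for d says that the overlaps  min_z p_{kd,z}  carry
  total mass at least max(0, P(D = d | Z = 0) + P(D = d | Z = 1) - 1), the smallest possible
  mass of the stratum D^(0) = D^(1) = d.  A full data law is then built explicitly: strata with
  this minimal diagonal mass, Y^(d) on the stratum (d, d) distributed proportionally to the
  overlaps, the rest of p_{kd,z} on the stratum where only D^(z) equals d, Y^(0) and Y^(1)
  conditionally independent given the stratum, and Z independent with its observed law.
*)

theory Submission
  imports Defs
begin

section \<open>Sums of maxima\<close>

lemma sum_split_le_sum_max:
  fixes x y :: "'a \<Rightarrow> 'b::{linorder, ordered_comm_monoid_add}"
  assumes "finite A" "T \<subseteq> A"
  shows "sum x T + sum y (A - T) \<le> (\<Sum>k\<in>A. max (x k) (y k))"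
proof -
  have "sum x T + sum y (A - T) \<le> (\<Sum>k\<in>T. max (x k) (y k)) + (\<Sum>k\<in>A - T. max (x k) (y k))"
    by (intro add_mono sum_mono) auto
  also have "\<dots> = (\<Sum>k\<in>A. max (x k) (y k))"
    using assms by (metis sum.subset_diff add.commute)
  finally show ?thesis .
qed

lemma sum_max_eq_split:
  fixes x y :: "'a \<Rightarrow> 'b::{linorder, comm_monoid_add}"
  assumes "finite A"
  obtains T where "T \<subseteq> A" "(\<Sum>k\<in>A. max (x k) (y k)) = sum x T + sum y (A - T)"
proof -
  define T where "T = A \<inter> {k. y k \<le> x k}"
  have "(\<Sum>k\<in>A. max (x k) (y k)) = (\<Sum>k\<in>A. if y k \<le> x k then x k else y k)"
    by (intro sum.cong) (auto simp: max_def)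
  also have "\<dots> = sum x T + sum y (A - T)"
    using assms by (simp add: T_def sum.If_cases Diff_eq Int_Un_distrib)
  finally show ?thesis
    using that[of T] by (simp add: T_def)
qed

lemma sum_max_le_iff:
  fixes x y :: "'a \<Rightarrow> 'b::{linorder, ordered_comm_monoid_add}"
  assumes "finite A"
  shows "(\<Sum>k\<in>A. max (x k) (y k)) \<le> c \<longleftrightarrow> (\<forall>T\<subseteq>A. sum x T + sum y (A - T) \<le> c)"
proof
  assume le: "(\<Sum>k\<in>A. max (x k) (y k)) \<le> c"
  show "\<forall>T\<subseteq>A. sum x T + sum y (A - T) \<le> c"
  proof (intro allI impI)
    fix T assume "T \<subseteq> A"
    from sum_split_le_sum_max[OF assms this] le show "sum x T + sum y (A - T) \<le> c"
      by (rule order_trans)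
  qed
next
  assume "\<forall>T\<subseteq>A. sum x T + sum y (A - T) \<le> c"
  moreover obtain T where "T \<subseteq> A" "(\<Sum>k\<in>A. max (x k) (y k)) = sum x T + sum y (A - T)"
    using sum_max_eq_split[OF assms] .
  ultimately show "(\<Sum>k\<in>A. max (x k) (y k)) \<le> c" by simp
qed

lemma sum_neg_plus_diff_le_0_iff:
  fixes a x y :: "'a \<Rightarrow> real"
  assumes "finite A" "T \<subseteq> A" "sum a A + sum y A = 1"
  shows "(\<Sum>k\<in>A. - a k) + (\<Sum>k\<in>T. x k - y k) \<le> 0 \<longleftrightarrow> sum x T + sum y (A - T) \<le> 1"
proof -
  have "sum y A = sum y T + sum y (A - T)"
    using assms(1,2) by (metis sum.subset_diff add.commute)
  then show ?thesis
    using assms(3) by (simp add: sum_negf sum_subtractf) linarith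
qed

lemma lessThan_subset_cases:
  fixes n :: nat
  assumes "T \<subseteq> {..<n}"
  obtains "T = {}" | "T = {..<n}"
    | "T \<noteq> {}" "T \<subseteq> {k. k + 1 < n}"
    | "{..<n} - T \<noteq> {}" "{..<n} - T \<subseteq> {k. k + 1 < n}"
proof (cases "n - 1 \<in> T")
  case True
  have "{..<n} - T \<subseteq> {k. k + 1 < n}"
  proof
    fix k assume "k \<in> {..<n} - T"
    with True have "k < n" "k \<noteq> n - 1" by auto
    then show "k \<in> {k. k + 1 < n}" by simp
  qed
  then show ?thesis using that(2,4) assms by blast
next
  case False
  have "T \<subseteq> {k. k + 1 < n}"
  proof
    fix k assume "k \<in> T"
    with False assms have "k < n" "k \<noteq> n - 1" by auto
    then show "k \<in> {k. k + 1 < n}" by simp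
  qed
  then show ?thesis using that(1,3) by blast
qed

section \<open>The instrumental inequality\<close>

definition instrumental_inequality :: "nat \<Rightarrow> (nat \<Rightarrow> bool \<Rightarrow> bool \<Rightarrow> real) \<Rightarrow> bool \<Rightarrow> bool" where
  "instrumental_inequality n p d \<longleftrightarrow> (\<Sum>k<n. max (p k d True) (p k d False)) \<le> 1"

locale conditional_table =
  fixes n :: nat and p :: "nat \<Rightarrow> bool \<Rightarrow> bool \<Rightarrow> real"
  assumes nonneg: "\<And>k d z. 0 \<le> p k d z"
    and total: "\<And>z. (\<Sum>k<n. p k True z) + (\<Sum>k<n. p k False z) = 1"
begin

lemma sum_le_one:
  assumes "T \<subseteq> {..<n}"
  shows "(\<Sum>k\<in>T. p k d z) \<le> 1"
proof -
  have "(\<Sum>k\<in>T. p k d z) \<le> (\<Sum>k<n. p k d z)"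
    using assms by (intro sum_mono2) (auto simp: nonneg)
  also have "\<dots> \<le> 1"
    using total[of z] sum_nonneg[of "{..<n}" "\<lambda>k. p k (\<not> d) z"] nonneg by (cases d) auto
  finally show ?thesis .
qed

lemma instrumental_inequality_untreated_iff:
  "instrumental_inequality n p False \<longleftrightarrow>
    (\<forall>T. T \<noteq> {} \<and> T \<subset> {..<n} \<longrightarrow>
      (\<Sum>k<n. - p k True False) + (\<Sum>k\<in>T. p k False True - p k False False) \<le> 0)"
proof -
  let ?S = "\<lambda>T. (\<Sum>k\<in>T. p k False True) + (\<Sum>k\<in>{..<n} - T. p k False False)"
  have ineq: "instrumental_inequality n p False \<longleftrightarrow> (\<forall>T\<subseteq>{..<n}. ?S T \<le> 1)"
    unfolding instrumental_inequality_def by (rule sum_max_le_iff) simp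
  have cond: "(\<Sum>k<n. - p k True False) + (\<Sum>k\<in>T. p k False True - p k False False) \<le> 0
      \<longleftrightarrow> ?S T \<le> 1" if "T \<subseteq> {..<n}" for T
    using that total[of False] by (intro sum_neg_plus_diff_le_0_iff) auto
  have trivial: "?S {} \<le> 1" "?S {..<n} \<le> 1"
    by (simp_all add: sum_le_one)
  show ?thesis
    unfolding ineq
  proof (intro iffI allI impI)
    fix T assume "\<forall>T\<subseteq>{..<n}. ?S T \<le> 1" and "T \<noteq> {} \<and> T \<subset> {..<n}"
    then have "T \<subseteq> {..<n}" "?S T \<le> 1" by auto
    then show "(\<Sum>k<n. - p k True False) + (\<Sum>k\<in>T. p k False True - p k False False) \<le> 0"
      using cond by blast
  next
    fix T :: "nat set"
    assume conds: "\<forall>T. T \<noteq> {} \<and> T \<subset> {..<n} \<longrightarrow>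
      (\<Sum>k<n. - p k True False) + (\<Sum>k\<in>T. p k False True - p k False False) \<le> 0"
      and T: "T \<subseteq> {..<n}"
    show "?S T \<le> 1"
    proof (cases "T = {} \<or> T = {..<n}")
      case True
      with trivial show ?thesis by auto
    next
      case False
      with T conds have "(\<Sum>k<n. - p k True False) + (\<Sum>k\<in>T. p k False True - p k False False) \<le> 0"
        by blast
      with cond[OF T] show ?thesis by blast
    qed
  qed
qed

lemma instrumental_inequality_treated_iff:
  "instrumental_inequality n p True \<longleftrightarrow>
    (\<forall>T. T \<noteq> {} \<and> T \<subseteq> {k. k + 1 < n} \<longrightarrow>
      (\<Sum>k<n. - p k False True) + (\<Sum>k\<in>T. p k True False - p k True True) \<le> 0) \<and>
    (\<forall>T. T \<noteq> {} \<and> T \<subseteq> {k. k + 1 < n} \<longrightarrow>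
      (\<Sum>k<n. - p k False False) + (\<Sum>k\<in>T. p k True True - p k True False) \<le> 0)"
    (is "_ \<longleftrightarrow> (\<forall>T. ?small T \<longrightarrow> ?cond1 T) \<and> (\<forall>T. ?small T \<longrightarrow> ?cond3 T)")
proof -
  let ?S = "\<lambda>T. (\<Sum>k\<in>T. p k True True) + (\<Sum>k\<in>{..<n} - T. p k True False)"
  have ineq: "instrumental_inequality n p True \<longleftrightarrow> (\<forall>T\<subseteq>{..<n}. ?S T \<le> 1)"
    unfolding instrumental_inequality_def by (rule sum_max_le_iff) simp
  have cond1: "?cond1 T \<longleftrightarrow> ?S ({..<n} - T) \<le> 1" if "T \<subseteq> {..<n}" for T
  proof -
    have "?cond1 T \<longleftrightarrow> (\<Sum>k\<in>T. p k True False) + (\<Sum>k\<in>{..<n} - T. p k True True) \<le> 1"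
      using that total[of True] by (intro sum_neg_plus_diff_le_0_iff) (auto simp: add.commute)
    moreover have "{..<n} - ({..<n} - T) = T" using that by auto
    ultimately show ?thesis by (simp add: add.commute)
  qed
  have cond3: "?cond3 T \<longleftrightarrow> ?S T \<le> 1" if "T \<subseteq> {..<n}" for T
    using that total[of False] by (intro sum_neg_plus_diff_le_0_iff) (auto simp: add.commute)
  have trivial: "?S {} \<le> 1" "?S {..<n} \<le> 1"
    by (simp_all add: sum_le_one)
  show ?thesis
    unfolding ineq
  proof (intro iffI conjI allI impI)
    fix T assume all: "\<forall>T\<subseteq>{..<n}. ?S T \<le> 1" and small: "?small T"
    from small have T: "T \<subseteq> {..<n}" by auto
    from all[rule_format, OF Diff_subset] show "?cond1 T" by (rule cond1[OF T, THEN iffD2])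
    from all[rule_format, OF T] show "?cond3 T" by (rule cond3[OF T, THEN iffD2])
  next
    fix T :: "nat set"
    assume conds: "(\<forall>T. ?small T \<longrightarrow> ?cond1 T) \<and> (\<forall>T. ?small T \<longrightarrow> ?cond3 T)"
      and T: "T \<subseteq> {..<n}"
    from T show "?S T \<le> 1"
    proof (cases rule: lessThan_subset_cases)
      case 1
      then show ?thesis using trivial(1) by simp
    next
      case 2
      then show ?thesis using trivial(2) by simp
    next
      case 3
      from conds[THEN conjunct2, rule_format, OF conjI[OF 3]] show ?thesis by (rule cond3[OF T, THEN iffD1])
    next
      case 4
      from conds[THEN conjunct1, rule_format, OF conjI[OF 4]] have "?S ({..<n} - ({..<n} - T)) \<le> 1" by (rule cond1[OF Diff_subset, THEN iffD1])
      moreover have "{..<n} - ({..<n} - T) = T" using T by auto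
      ultimately show ?thesis by simp
    qed
  qed
qed

end

section \<open>Necessity\<close>

definition potential_treatment :: "bool \<Rightarrow> nat \<times> nat \<times> bool \<times> bool \<Rightarrow> bool" where
  "potential_treatment z = (\<lambda>(y0, y1, d0, d1). if z then d1 else d0)"

definition potential_outcome :: "bool \<Rightarrow> nat \<times> nat \<times> bool \<times> bool \<Rightarrow> nat" where
  "potential_outcome d = (\<lambda>(y0, y1, d0, d1). if d then y1 else y0)"

definition obs_cell :: "nat \<Rightarrow> bool \<Rightarrow> bool \<Rightarrow> (nat \<times> nat \<times> bool \<times> bool) set" where
  "obs_cell k d z = {u. potential_treatment z u = d \<and> potential_outcome d u = k}"

lemma obs_eq: "obs (u, z) = (potential_outcome (potential_treatment z u) u, potential_treatment z u, z)"
  by (cases u) (simp add: obs_def potential_outcome_def potential_treatment_def)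

lemma vimage_obs_singleton: "obs -` {(k, d, z)} = obs_cell k d z \<times> {z}"
  by (auto simp: obs_eq obs_cell_def)

lemma vimage_obs_instrument: "obs -` {w. snd (snd w) = z} = UNIV \<times> {z}"
  by (auto simp: obs_eq)

lemma random_assignment_prob_Times:
  assumes "random_assignment F"
  shows "measure_pmf.prob F (A \<times> C) =
    measure_pmf.prob (map_pmf fst F) A * measure_pmf.prob (map_pmf snd F) C"
proof -
  have "A \<times> C = {\<omega>. fst \<omega> \<in> A \<and> snd \<omega> \<in> C}" by auto
  with assms show ?thesis
    unfolding random_assignment_def by (simp add: vimage_def)
qed

lemma pcond_eq_prob_obs_cell:
  assumes "random_assignment F" "map_pmf obs F = Q"
    and "0 < measure_pmf.prob Q {w. snd (snd w) = z}"
  shows "pcond Q k d z = measure_pmf.prob (map_pmf fst F) (obs_cell k d z)"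
proof -
  have "measure_pmf.prob Q {(k, d, z)} = measure_pmf.prob F (obs_cell k d z \<times> {z})"
    unfolding assms(2)[symmetric] measure_map_pmf vimage_obs_singleton ..
  also have "\<dots> = measure_pmf.prob (map_pmf fst F) (obs_cell k d z) * measure_pmf.prob (map_pmf snd F) {z}"
    by (rule random_assignment_prob_Times[OF assms(1)])
  finally have cell: "measure_pmf.prob Q {(k, d, z)} =
      measure_pmf.prob (map_pmf fst F) (obs_cell k d z) * measure_pmf.prob (map_pmf snd F) {z}" .
  have "measure_pmf.prob Q {w. snd (snd w) = z} = measure_pmf.prob F (UNIV \<times> {z})"
    unfolding assms(2)[symmetric] measure_map_pmf vimage_obs_instrument ..
  also have "\<dots> = measure_pmf.prob (map_pmf snd F) {z}"
    using random_assignment_prob_Times[OF assms(1), of UNIV "{z}"] by simp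
  finally show ?thesis
    using assms(3) cell by (simp add: pcond_def)
qed

lemma instrumental_inequality_necessary:
  assumes "random_assignment F" "map_pmf obs F = Q"
    and "\<And>z. 0 < measure_pmf.prob Q {w. snd (snd w) = z}"
  shows "instrumental_inequality n (pcond Q) d"
proof -
  define Y where "Y = map_pmf (potential_outcome d) (map_pmf fst F)"
  have "pcond Q k d z \<le> pmf Y k" for k z
  proof -
    have "obs_cell k d z \<subseteq> potential_outcome d -` {k}" by (auto simp: obs_cell_def)
    then show ?thesis
      unfolding pcond_eq_prob_obs_cell[OF assms(1,2,3)] Y_def pmf_map
      by (rule measure_pmf.finite_measure_mono) simp
  qed
  then have "(\<Sum>k<n. max (pcond Q k d True) (pcond Q k d False)) \<le> (\<Sum>k<n. pmf Y k)"
    by (intro sum_mono) simp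
  also have "\<dots> = measure_pmf.prob Y {..<n}"
    by (simp add: measure_measure_pmf_finite)
  also have "\<dots> \<le> 1" by simp
  finally show ?thesis unfolding instrumental_inequality_def .
qed

section \<open>Sufficiency: an explicit full data law\<close>

lemma pmf_embed_pmf_finite_support:
  assumes "finite B" "\<And>x. 0 \<le> f x" "\<And>x. x \<notin> B \<Longrightarrow> f x = 0" "sum f B = 1"
  shows "pmf (embed_pmf f) = f" "set_pmf (embed_pmf f) \<subseteq> B"
proof -
  have "(\<integral>\<^sup>+x. ennreal (f x) \<partial>count_space UNIV) = (\<Sum>x\<in>B. ennreal (f x))"
    using assms(1,3) by (intro nn_integral_count_space') auto
  also have "\<dots> = 1"
    using assms(2,4) by (simp add: sum_ennreal)
  finally have "(\<integral>\<^sup>+x. ennreal (f x) \<partial>count_space UNIV) = 1" .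
  then show pmf: "pmf (embed_pmf f) = f"
    using assms(2) by (intro ext pmf_embed_pmf) auto
  show "set_pmf (embed_pmf f) \<subseteq> B"
    using assms(3) by (auto simp: set_pmf_eq pmf)
qed

lemma prob_eq_sum_finite_support:
  assumes "finite B" "set_pmf M \<subseteq> B"
  shows "measure_pmf.prob M A = (\<Sum>x\<in>B. if x \<in> A then pmf M x else 0)"
proof -
  have "measure_pmf.prob M A = measure_pmf.prob M (B \<inter> A)"
    using assms(2) measure_Int_set_pmf[of M A] measure_Int_set_pmf[of M "B \<inter> A"]
    by (metis inf.absorb_iff2 inf_commute inf_left_commute)
  also have "\<dots> = (\<Sum>x\<in>B \<inter> A. pmf M x)"
    using assms(1) by (simp add: measure_measure_pmf_finite)
  finally show ?thesis
    using assms(1) by (simp add: sum.inter_restrict)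
qed

lemma sum_profiles:
  "(\<Sum>u\<in>{..<n} \<times> {..<n} \<times> UNIV \<times> UNIV. f u) =
    (\<Sum>d0\<in>UNIV. \<Sum>d1\<in>UNIV. \<Sum>y0<n. \<Sum>y1<n. f (y0, y1, d0, d1))"
proof -
  have "(\<Sum>d0\<in>UNIV. \<Sum>d1\<in>UNIV. \<Sum>y0<n. \<Sum>y1<n. f (y0, y1, d0, d1)) =
      (\<Sum>(d0, d1, y0, y1)\<in>UNIV \<times> UNIV \<times> {..<n} \<times> {..<n}. f (y0, y1, d0, d1))"
    by (simp add: sum.cartesian_product')
  also have "\<dots> = (\<Sum>u\<in>{..<n} \<times> {..<n} \<times> UNIV \<times> UNIV. f u)"
    by (rule sum.reindex_bij_witness[of _ "\<lambda>(y0, y1, d0, d1). (d0, d1, y0, y1)"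
          "\<lambda>(d0, d1, y0, y1). (y0, y1, d0, d1)"]) auto
  finally show ?thesis ..
qed

locale instrumental_table = conditional_table +
  assumes instrumental: "\<And>d. instrumental_inequality n p d"
begin

lemma n_pos: "0 < n"
  using total[of True] by (cases n) auto

definition treat_prob :: "bool \<Rightarrow> bool \<Rightarrow> real" where
  "treat_prob d z = (\<Sum>k<n. p k d z)"

lemma treat_prob_nonneg: "0 \<le> treat_prob d z"
  unfolding treat_prob_def by (intro sum_nonneg nonneg)

lemma treat_prob_Not: "treat_prob (\<not> d) z = 1 - treat_prob d z"
  using total[of z] by (cases d) (auto simp: treat_prob_def)

(* The smallest mass of the stratum D^(0) = D^(1) = d compatible with the marginals
   P(D = d | Z = z) (Frechet lower bound). *)

definition common_mass :: "bool \<Rightarrow> real" where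
  "common_mass d = max 0 (treat_prob d False + treat_prob d True - 1)"

definition stratum_prob :: "bool \<Rightarrow> bool \<Rightarrow> real" where
  "stratum_prob d0 d1 = (if d0 = d1 then common_mass d0 else treat_prob d0 False - common_mass d0)"

lemma stratum_prob_nonneg: "0 \<le> stratum_prob d0 d1"
  using treat_prob_nonneg[of d0] treat_prob_Not[of d0 True] treat_prob_nonneg[of "\<not> d0" True]
  by (auto simp: stratum_prob_def common_mass_def)

lemma stratum_prob_Not_left: "stratum_prob (\<not> d) d = treat_prob d True - common_mass d"
  using treat_prob_Not[of d False] treat_prob_Not[of d True]
  by (auto simp: stratum_prob_def common_mass_def)

lemma sum_stratum_prob: "(\<Sum>d0\<in>UNIV. \<Sum>d1\<in>UNIV. stratum_prob d0 d1) = 1"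
  using treat_prob_Not[of True False] by (simp add: UNIV_bool stratum_prob_def)

definition overlap :: "bool \<Rightarrow> nat \<Rightarrow> real" where
  "overlap d k = min (p k d True) (p k d False)"

lemma common_mass_le_sum_overlap: "common_mass d \<le> (\<Sum>k<n. overlap d k)"
proof -
  have "(\<Sum>k<n. max (p k d True) (p k d False)) + (\<Sum>k<n. overlap d k) =
      (\<Sum>k<n. max (p k d True) (p k d False) + min (p k d True) (p k d False))"
    by (simp add: overlap_def sum.distrib)
  also have "\<dots> = treat_prob d True + treat_prob d False"
    unfolding treat_prob_def sum.distrib[symmetric] by (intro sum.cong refl) (simp add: max_def min_def)
  finally have "(\<Sum>k<n. max (p k d True) (p k d False)) + (\<Sum>k<n. overlap d k) =
      treat_prob d True + treat_prob d False" .
  moreover have "0 \<le> (\<Sum>k<n. overlap d k)"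
    by (intro sum_nonneg) (simp add: overlap_def nonneg)
  ultimately show ?thesis
    using instrumental[of d] by (simp add: common_mass_def instrumental_inequality_def)
qed

(* P(Y^(d) = k, D^(0) = D^(1) = d), which has to fit under both p_{kd,0} and p_{kd,1}. *)
definition shared :: "bool \<Rightarrow> nat \<Rightarrow> real" where
  "shared d k = overlap d k * common_mass d / (\<Sum>j<n. overlap d j)"

lemma shared_bounds: "0 \<le> shared d k" "shared d k \<le> overlap d k"
proof -
  have overlap_nonneg: "0 \<le> overlap d j" for j by (simp add: overlap_def nonneg)
  have mass_nonneg: "0 \<le> common_mass d" by (simp add: common_mass_def)
  then show "0 \<le> shared d k"
    unfolding shared_def by (intro divide_nonneg_nonneg mult_nonneg_nonneg sum_nonneg overlap_nonneg)
  show "shared d k \<le> overlap d k"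
  proof (cases "(\<Sum>j<n. overlap d j) = 0")
    case True
    then show ?thesis by (simp add: shared_def overlap_nonneg)
  next
    case False
    then have "0 < (\<Sum>j<n. overlap d j)"
      using sum_nonneg[of "{..<n}" "overlap d"] overlap_nonneg by fastforce
    then show ?thesis
      using common_mass_le_sum_overlap[of d] overlap_nonneg[of k]
      by (simp add: shared_def pos_divide_le_eq mult_left_mono)
  qed
qed

lemma sum_shared: "(\<Sum>k<n. shared d k) = common_mass d"
proof (cases "(\<Sum>j<n. overlap d j) = 0")
  case True
  with common_mass_le_sum_overlap[of d] have "common_mass d = 0"
    by (simp add: common_mass_def)
  then show ?thesis by (simp add: shared_def)
next
  case False
  then show ?thesis
    by (simp add: shared_def flip: sum_divide_distrib sum_distrib_right)
qed

(* P(Y^(d) = k, D^(0) = d0, D^(1) = d1).  On the stratum where neither D^(z) equals d, Y^(d) is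
   never observed, and its mass is put on the outcome 0. *)
definition outcome_weight :: "bool \<Rightarrow> bool \<Rightarrow> bool \<Rightarrow> nat \<Rightarrow> real" where
  "outcome_weight d d0 d1 k =
    (if n \<le> k then 0
     else if d0 = d \<and> d1 = d then shared d k
     else if d0 = d then p k d False - shared d k
     else if d1 = d then p k d True - shared d k
     else if k = 0 then stratum_prob d0 d1 else 0)"

lemma outcome_weight_nonneg: "0 \<le> outcome_weight d d0 d1 k"
  using shared_bounds[of d k] stratum_prob_nonneg[of d0 d1]
  by (auto simp: outcome_weight_def overlap_def)

lemma sum_outcome_weight: "(\<Sum>k<n. outcome_weight d d0 d1 k) = stratum_prob d0 d1"
proof -
  have "(\<Sum>k<n. outcome_weight d d0 d1 k) =
    (\<Sum>k<n. if d0 = d \<and> d1 = d then shared d k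
      else if d0 = d then p k d False - shared d k
      else if d1 = d then p k d True - shared d k
      else if k = 0 then stratum_prob d0 d1 else 0)"
    by (intro sum.cong) (auto simp: outcome_weight_def)
  also have "\<dots> = stratum_prob d0 d1"
  proof -
    consider "d0 = d" "d1 = d" | "d0 = d" "d1 = (\<not> d)" | "d0 = (\<not> d)" "d1 = d"
      | "d0 = (\<not> d)" "d1 = (\<not> d)"
      by blast
    then show ?thesis
    proof cases
      case 1
      then show ?thesis by (simp add: sum_shared stratum_prob_def)
    next
      case 2
      then show ?thesis by (simp add: sum_subtractf sum_shared treat_prob_def stratum_prob_def)
    next
      case 3
      then show ?thesis by (simp add: sum_subtractf sum_shared treat_prob_def stratum_prob_Not_left)
    next
      case 4
      then show ?thesis using n_pos by simp
    qed
  qed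
  finally show ?thesis .
qed

lemma outcome_weight_eq_0:
  assumes "stratum_prob d0 d1 = 0"
  shows "outcome_weight d d0 d1 k = 0"
proof (cases "k < n")
  case True
  then show ?thesis
    using assms sum_outcome_weight[of d d0 d1] outcome_weight_nonneg
    by (simp add: sum_nonneg_eq_0_iff)
next
  case False
  then show ?thesis by (simp add: outcome_weight_def)
qed

(* Y^(0) and Y^(1) are conditionally independent given the stratum; on empty strata the
   division by 0 yields 0. *)
definition profile_weight :: "nat \<times> nat \<times> bool \<times> bool \<Rightarrow> real" where
  "profile_weight = (\<lambda>(y0, y1, d0, d1).
    outcome_weight False d0 d1 y0 * outcome_weight True d0 d1 y1 / stratum_prob d0 d1)"

lemma profile_weight_nonneg: "0 \<le> profile_weight u"
  by (auto simp: profile_weight_def outcome_weight_nonneg stratum_prob_nonneg split: prod.splits)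

lemma profile_weight_outside:
  "u \<notin> {..<n} \<times> {..<n} \<times> UNIV \<times> UNIV \<Longrightarrow> profile_weight u = 0"
  by (auto simp: profile_weight_def outcome_weight_def split: prod.splits)

lemma sum_profile_weight_untreated:
  "(\<Sum>y0<n. profile_weight (y0, y1, d0, d1)) = outcome_weight True d0 d1 y1"
proof (cases "stratum_prob d0 d1 = 0")
  case True
  then show ?thesis by (simp add: profile_weight_def outcome_weight_eq_0)
next
  case False
  then show ?thesis
    by (simp add: profile_weight_def sum_outcome_weight flip: sum_divide_distrib sum_distrib_right)
qed

lemma sum_profile_weight_treated:
  "(\<Sum>y1<n. profile_weight (y0, y1, d0, d1)) = outcome_weight False d0 d1 y0"
proof (cases "stratum_prob d0 d1 = 0")
  case True
  then show ?thesis by (simp add: profile_weight_def outcome_weight_eq_0)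
next
  case False
  then show ?thesis
    by (simp add: profile_weight_def sum_outcome_weight flip: sum_divide_distrib sum_distrib_left)
qed

lemma sum_profile_weight: "(\<Sum>u\<in>{..<n} \<times> {..<n} \<times> UNIV \<times> UNIV. profile_weight u) = 1"
  unfolding sum_profiles
  by (simp add: sum.swap[of _ "{..<n}" "{..<n}"] sum_profile_weight_untreated sum_outcome_weight
      sum_stratum_prob)

definition potential_law :: "(nat \<times> nat \<times> bool \<times> bool) pmf" where
  "potential_law = embed_pmf profile_weight"

lemma pmf_potential_law: "pmf potential_law u = profile_weight u"
  and set_pmf_potential_law: "set_pmf potential_law \<subseteq> {..<n} \<times> {..<n} \<times> UNIV \<times> UNIV"
  using pmf_embed_pmf_finite_support[OF _ profile_weight_nonneg profile_weight_outside sum_profile_weight]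
  by (simp_all add: potential_law_def)

lemma prob_obs_cell:
  assumes "k < n"
  shows "measure_pmf.prob potential_law (obs_cell k d z) = p k d z"
proof -
  have cell: "(\<Sum>y0<n. \<Sum>y1<n. if (y0, y1, d0, d1) \<in> obs_cell k d z then profile_weight (y0, y1, d0, d1) else 0)
      = (if (if z then d1 else d0) = d then outcome_weight d d0 d1 k else 0)" for d0 d1
  proof (cases d)
    case True
    have "(\<Sum>y0<n. \<Sum>y1<n. if (y0, y1, d0, d1) \<in> obs_cell k d z then profile_weight (y0, y1, d0, d1) else 0)
      = (\<Sum>y0<n. \<Sum>y1<n. if y1 = k then (if (if z then d1 else d0) then profile_weight (y0, y1, d0, d1) else 0) else 0)"
      using True by (intro sum.cong refl) (auto simp: obs_cell_def potential_treatment_def potential_outcome_def)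
    then show ?thesis
      using True assms by (simp add: sum_profile_weight_untreated)
  next
    case False
    have "(\<Sum>y0<n. \<Sum>y1<n. if (y0, y1, d0, d1) \<in> obs_cell k d z then profile_weight (y0, y1, d0, d1) else 0)
      = (\<Sum>y0<n. if y0 = k then (if (if z then d1 else d0) then 0 else \<Sum>y1<n. profile_weight (y0, y1, d0, d1)) else 0)"
      using False by (intro sum.cong refl) (auto simp: obs_cell_def potential_treatment_def potential_outcome_def)
    then show ?thesis
      using False assms by (simp add: sum_profile_weight_treated)
  qed
  have "measure_pmf.prob potential_law (obs_cell k d z) =
      (\<Sum>u\<in>{..<n} \<times> {..<n} \<times> UNIV \<times> UNIV. if u \<in> obs_cell k d z then profile_weight u else 0)"
    unfolding pmf_potential_law[symmetric] by (rule prob_eq_sum_finite_support[OF _ set_pmf_potential_law]) simp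
  also have "\<dots> = (\<Sum>d0\<in>UNIV. \<Sum>d1\<in>UNIV. if (if z then d1 else d0) = d then outcome_weight d d0 d1 k else 0)"
    unfolding sum_profiles cell ..
  also have "\<dots> = p k d z"
    using assms by (cases z; cases d) (simp_all add: UNIV_bool outcome_weight_def)
  finally show ?thesis .
qed

end

lemma conditional_table_pcond:
  assumes supp: "set_pmf Q \<subseteq> {..<n} \<times> UNIV \<times> UNIV"
    and pos: "\<And>z. 0 < measure_pmf.prob Q {w. snd (snd w) = z}"
  shows "conditional_table n (pcond Q)"
proof
  show "0 \<le> pcond Q k d z" for k d z
    by (simp add: pcond_def)
  show "(\<Sum>k<n. pcond Q k True z) + (\<Sum>k<n. pcond Q k False z) = 1" for z
  proof -
    have "measure_pmf.prob Q {w. snd (snd w) = z} =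
        (\<Sum>w\<in>{..<n} \<times> UNIV \<times> UNIV. if w \<in> {w. snd (snd w) = z} then pmf Q w else 0)"
      using supp by (intro prob_eq_sum_finite_support) auto
    also have "\<dots> = (\<Sum>k<n. pmf Q (k, False, z) + pmf Q (k, True, z))"
      by (cases z) (simp_all add: sum.cartesian_product' UNIV_bool)
    finally have P: "measure_pmf.prob Q {w. snd (snd w) = z} =
        (\<Sum>k<n. pmf Q (k, True, z)) + (\<Sum>k<n. pmf Q (k, False, z))"
      by (simp add: sum.distrib)
    show ?thesis
      using pos[of z] unfolding pcond_def measure_pmf_single sum_divide_distrib[symmetric] P
      by (simp flip: add_divide_distrib)
  qed
qed

lemma induced_by_pair_pmf:
  assumes supp: "set_pmf Q \<subseteq> {..<n} \<times> UNIV \<times> UNIV"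
    and pos: "\<And>z. 0 < measure_pmf.prob Q {w. snd (snd w) = z}"
    and U_supp: "set_pmf U \<subseteq> {..<n} \<times> {..<n} \<times> UNIV \<times> UNIV"
    and U_cell: "\<And>k d z. k < n \<Longrightarrow> measure_pmf.prob U (obs_cell k d z) = pcond Q k d z"
  shows "induced_by n (pair_pmf U (map_pmf (\<lambda>w. snd (snd w)) Q)) Q"
proof -
  define Z where "Z = map_pmf (\<lambda>w. snd (snd w)) Q"
  have "outcomes_in n (pair_pmf U Z)"
    using U_supp by (auto simp: outcomes_in_def)
  moreover have "random_assignment (pair_pmf U Z)"
    unfolding random_assignment_def
  proof (intro allI)
    fix A :: "(nat \<times> nat \<times> bool \<times> bool) set" and C :: "bool set"
    have events: "{\<omega>. fst \<omega> \<in> A \<and> snd \<omega> \<in> C} = A \<times> C" "{\<omega>. fst \<omega> \<in> A} = A \<times> UNIV"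
      "{\<omega>. snd \<omega> \<in> C} = UNIV \<times> C"
      by auto
    show "measure_pmf.prob (pair_pmf U Z) {\<omega>. fst \<omega> \<in> A \<and> snd \<omega> \<in> C} =
        measure_pmf.prob (pair_pmf U Z) {\<omega>. fst \<omega> \<in> A} * measure_pmf.prob (pair_pmf U Z) {\<omega>. snd \<omega> \<in> C}"
      unfolding events by (simp add: measure_pmf_prob_product)
  qed
  moreover have "map_pmf obs (pair_pmf U Z) = Q"
  proof (rule pmf_eqI)
    fix w :: obs_data
    obtain k d z where w: "w = (k, d, z)" by (cases w) auto
    have "pmf (map_pmf obs (pair_pmf U Z)) w = measure_pmf.prob (pair_pmf U Z) (obs_cell k d z \<times> {z})"
      unfolding w pmf_map vimage_obs_singleton ..
    also have "\<dots> = measure_pmf.prob U (obs_cell k d z) * measure_pmf.prob Q {w. snd (snd w) = z}"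
      by (simp add: measure_pmf_prob_product Z_def vimage_def)
    also have "\<dots> = pmf Q w"
    proof (cases "k < n")
      case True
      then show ?thesis
        using pos[of z] by (simp add: U_cell pcond_def measure_pmf_single w)
    next
      case False
      then have "set_pmf U \<inter> obs_cell k d z = {}" "w \<notin> set_pmf Q"
        using U_supp supp by (auto simp: obs_cell_def potential_outcome_def w)
      then have "measure_pmf.prob U (obs_cell k d z) = 0" "pmf Q w = 0"
        by (simp_all add: measure_pmf_zero_iff pmf_eq_0_set_pmf)
      then show ?thesis by simp
    qed
    finally show "pmf (map_pmf obs (pair_pmf U Z)) w = pmf Q w" .
  qed
  ultimately show ?thesis
    unfolding induced_by_def Z_def by blast
qed

theorem theorem5:
  fixes n :: nat and Q :: "obs_data pmf"
  assumes supp: "set_pmf Q \<subseteq> {..<n} \<times> UNIV \<times> UNIV"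
    and Z0: "measure_pmf.prob Q {w. snd (snd w) = False} > 0"
    and Z1: "measure_pmf.prob Q {w. snd (snd w) = True} > 0"
  shows "(\<exists>F. induced_by n F Q) \<longleftrightarrow>
    ((\<forall>T. T \<noteq> {} \<and> T \<subseteq> {k. k + 1 < n} \<longrightarrow>
        (\<Sum>k<n. - pcond Q k False True)
        + (\<Sum>k\<in>T. pcond Q k True False - pcond Q k True True) \<le> 0)
   \<and> (\<forall>T. T \<noteq> {} \<and> T \<subset> {..<n} \<longrightarrow>
        (\<Sum>k<n. - pcond Q k True False)
        + (\<Sum>k\<in>T. pcond Q k False True - pcond Q k False False) \<le> 0)
   \<and> (\<forall>T. T \<noteq> {} \<and> T \<subseteq> {k. k + 1 < n} \<longrightarrow>
        (\<Sum>k<n. - pcond Q k False False)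
        + (\<Sum>k\<in>T. pcond Q k True True - pcond Q k True False) \<le> 0))"
proof -
  have pos: "0 < measure_pmf.prob Q {w. snd (snd w) = z}" for z
    using Z0 Z1 by (cases z) simp_all
  interpret conditional_table n "pcond Q"
    by (rule conditional_table_pcond[OF supp pos])
  have "(\<exists>F. induced_by n F Q) \<longleftrightarrow>
      instrumental_inequality n (pcond Q) True \<and> instrumental_inequality n (pcond Q) False"
  proof
    assume "\<exists>F. induced_by n F Q"
    then obtain F where "random_assignment F" "map_pmf obs F = Q"
      unfolding induced_by_def by blast
    from instrumental_inequality_necessary[OF this pos]
    show "instrumental_inequality n (pcond Q) True \<and> instrumental_inequality n (pcond Q) False"
      by blast
  next
    assume ineqs: "instrumental_inequality n (pcond Q) True \<and> instrumental_inequality n (pcond Q) False"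
    interpret instrumental_table n "pcond Q"
    proof
      show "instrumental_inequality n (pcond Q) d" for d
        using ineqs by (cases d) simp_all
    qed
    show "\<exists>F. induced_by n F Q"
      using induced_by_pair_pmf[OF supp pos set_pmf_potential_law prob_obs_cell] by blast
  qed
  then show ?thesis
    unfolding instrumental_inequality_treated_iff instrumental_inequality_untreated_iff
    by (simp only: conj_ac)
qed

end
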